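(* Let $I$ be a regular ideal in a Noetherian ring $A$ with Rees valuation rings $(V_1,\mathfrak{m}_1),\ldots,(V_r,\mathfrak{m}_r)$. Then $$I_>=\bigcap_i \mathfrak{m}_iIV_i\cap A.$$ In particular, $I_>$ is an integrally closed ideal.
   Context: A regular ideal is one containing a non-zero divisor. For $a\in A$, $\operatorname{ord}_I(a)=n$ if $a\in I^n\setminus I^{n+1}$ and $\infty$ if $a\in\bigcap_n I^n$; the asymptotic Samuel function is $\overline{v}_I(a)=\lim_{n\to\infty}\operatorname{ord}_I(a^n)/n$ (the limit exists, possibly $\infty$). $I_>=\{a\in A\mid \overline{v}_I(a)>1\}$. The Rees valuation rings of $I$ are the standard finite set of discrete rank one valuation rings $(V_i,\mathfrak{m}_i)$ (with valuations $v_i$) such that $\overline{v}_I(a)=\min_i v_i(a)/v_i(I)$, where $v_i(I)=\min\{v_i(b)\mid b\in I\}$; $IV_i$ and $\cap A$ are taken via the natural maps $A\to V_i$. *)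

theory Defs
  imports "HOL-Algebra.Algebra" "HOL-Library.Extended_Real"
begin

definition ideal_pow :: "('a, 'b) ring_scheme \<Rightarrow> 'a set \<Rightarrow> nat \<Rightarrow> 'a set" where
  "ideal_pow A I n = ((\<lambda>J. ideal_prod A I J) ^^ n) (carrier A)"

definition ord_ideal :: "('a, 'b) ring_scheme \<Rightarrow> 'a set \<Rightarrow> 'a \<Rightarrow> enat" where
  "ord_ideal A I a =
     (if (\<forall>n. a \<in> ideal_pow A I n) then \<infinity>
      else enat (THE n. a \<in> ideal_pow A I n \<and> a \<notin> ideal_pow A I (Suc n)))"

definition asymp_samuel :: "('a, 'b) ring_scheme \<Rightarrow> 'a set \<Rightarrow> 'a \<Rightarrow> ereal" where
  "asymp_samuel A I a =
     lim (\<lambda>n. ereal_of_enat (ord_ideal A I (a [^]\<^bsub>A\<^esub> n)) / ereal (real n))"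

definition I_greater :: "('a, 'b) ring_scheme \<Rightarrow> 'a set \<Rightarrow> 'a set" where
  "I_greater A I = {a \<in> carrier A. asymp_samuel A I a > 1}"

definition regular_ideal :: "('a, 'b) ring_scheme \<Rightarrow> 'a set \<Rightarrow> bool" where
  "regular_ideal A I \<longleftrightarrow> ideal I A \<and>
     (\<exists>x\<in>I. \<forall>y\<in>carrier A. x \<otimes>\<^bsub>A\<^esub> y = \<zero>\<^bsub>A\<^esub> \<longrightarrow> y = \<zero>\<^bsub>A\<^esub>)"

definition minimal_prime :: "('a, 'b) ring_scheme \<Rightarrow> 'a set \<Rightarrow> bool" where
  "minimal_prime A P \<longleftrightarrow> primeideal P A \<and>
     (\<forall>Q. primeideal Q A \<and> Q \<subseteq> P \<longrightarrow> Q = P)"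

definition integral_over_ideal :: "('a, 'b) ring_scheme \<Rightarrow> 'a set \<Rightarrow> 'a \<Rightarrow> bool" where
  "integral_over_ideal A J a \<longleftrightarrow> a \<in> carrier A \<and>
     (\<exists>n\<ge>1. \<exists>c. (\<forall>i\<in>{1..n}. c i \<in> ideal_pow A J i) \<and>
        (a [^]\<^bsub>A\<^esub> n) \<oplus>\<^bsub>A\<^esub>
          (\<Oplus>\<^bsub>A\<^esub>i\<in>{1..n}. c i \<otimes>\<^bsub>A\<^esub> (a [^]\<^bsub>A\<^esub> (n - i))) = \<zero>\<^bsub>A\<^esub>)"

definition integrally_closed_ideal :: "('a, 'b) ring_scheme \<Rightarrow> 'a set \<Rightarrow> bool" where
  "integrally_closed_ideal A J \<longleftrightarrow> ideal J A \<and>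
     {a. integral_over_ideal A J a} = J"

definition DVR_with_val :: "('v, 'c) ring_scheme \<Rightarrow> ('v \<Rightarrow> enat) \<Rightarrow> bool" where
  "DVR_with_val V v \<longleftrightarrow> domain V \<and> \<not> field V \<and>
     (\<forall>x\<in>carrier V. v x = \<infinity> \<longleftrightarrow> x = \<zero>\<^bsub>V\<^esub>) \<and>
     (\<forall>x\<in>carrier V. \<forall>y\<in>carrier V. v (x \<otimes>\<^bsub>V\<^esub> y) = v x + v y) \<and>
     (\<forall>x\<in>carrier V. \<forall>y\<in>carrier V. min (v x) (v y) \<le> v (x \<oplus>\<^bsub>V\<^esub> y)) \<and>
     (\<forall>x\<in>carrier V. \<forall>y\<in>carrier V. (x divides\<^bsub>V\<^esub> y) \<longleftrightarrow> v x \<le> v y) \<and>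
     (\<exists>t\<in>carrier V. v t = 1)"

definition max_ideal :: "('v, 'c) ring_scheme \<Rightarrow> 'v set" where
  "max_ideal V = (THE m. maximalideal m V)"

definition val_of_ideal :: "('v \<Rightarrow> enat) \<Rightarrow> ('a \<Rightarrow> 'v) \<Rightarrow> 'a set \<Rightarrow> enat" where
  "val_of_ideal v \<phi> I = (INF b\<in>I. v (\<phi> b))"

definition rees_formula ::
  "('a, 'b) ring_scheme \<Rightarrow> 'a set \<Rightarrow> nat set \<Rightarrow> (nat \<Rightarrow> 'a \<Rightarrow> 'v) \<Rightarrow> (nat \<Rightarrow> 'v \<Rightarrow> enat) \<Rightarrow> bool" where
  "rees_formula A I S \<phi> v \<longleftrightarrow>
     (\<forall>a\<in>carrier A. asymp_samuel A I a =
        (INF i\<in>S. ereal_of_enat (v i (\<phi> i a)) / ereal_of_enat (val_of_ideal (v i) (\<phi> i) I)))"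

text \<open>(V_i, v_i, phi_i), i < r, are the Rees valuation rings of I: each V_i is a rank one DVR
  receiving A via phi_i, whose kernel is a minimal prime P_i of A, with A/P_i \<subseteq> V_i \<subseteq> \<kappa>(P_i)
  (every element of V_i is a fraction of images of A), satisfying the Rees formula,
  and minimal with this property.\<close>
definition rees_valuation_rings ::
  "('a, 'b) ring_scheme \<Rightarrow> 'a set \<Rightarrow> nat \<Rightarrow> (nat \<Rightarrow> ('v, 'c) ring_scheme) \<Rightarrow>
   (nat \<Rightarrow> 'a \<Rightarrow> 'v) \<Rightarrow> (nat \<Rightarrow> 'v \<Rightarrow> enat) \<Rightarrow> bool" where
  "rees_valuation_rings A I r V \<phi> v \<longleftrightarrow>
     (\<forall>i<r. DVR_with_val (V i) (v i) \<and>
            \<phi> i \<in> ring_hom A (V i) \<and>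
            minimal_prime A {a \<in> carrier A. \<phi> i a = \<zero>\<^bsub>V i\<^esub>} \<and>
            (\<forall>x\<in>carrier (V i). \<exists>a\<in>carrier A. \<exists>b\<in>carrier A.
                \<phi> i b \<noteq> \<zero>\<^bsub>V i\<^esub> \<and> x \<otimes>\<^bsub>V i\<^esub> \<phi> i b = \<phi> i a)) \<and>
     rees_formula A I {..<r} \<phi> v \<and>
     (\<forall>S. S \<subset> {..<r} \<longrightarrow> \<not> rees_formula A I S \<phi> v)"

end

theory Submission
  imports Defs
begin

text \<open>Once \<open>v\<^sub>i(I) = k\<^sub>i\<close> is known to be finite, the Rees formula turns \<open>a \<in> I\<^sub>>\<close> into
  \<open>v\<^sub>i(a) \<ge> k\<^sub>i + 1\<close> for all \<open>i\<close>, and in the discrete valuation ring \<open>V\<^sub>i\<close> the ideal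
  \<open>m\<^sub>i I V\<^sub>i\<close> is exactly \<open>{v\<^sub>i \<ge> k\<^sub>i + 1}\<close>; so both sides are the ideal cut out by these
  inequalities. Such an ideal \<open>J\<close> is integrally closed: if \<open>a\<^sup>n + c\<^sub>1 a\<^sup>n\<^sup>-\<^sup>1 + \<dots> + c\<^sub>n = 0\<close>
  with \<open>c\<^sub>j \<in> J\<^sup>j\<close> and \<open>v(a) < m\<close>, then \<open>v(c\<^sub>j a\<^sup>n\<^sup>-\<^sup>j) \<ge> j m + (n - j) v(a) > n v(a)\<close>,
  contradicting \<open>v(a\<^sup>n) = n v(a)\<close>. Noetherianity and regularity of \<open>I\<close> only serve to produce
  the Rees valuations, which the hypotheses already supply.\<close>

locale valuation = ring R for R (structure) +
  fixes u :: "'a \<Rightarrow> enat"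
  assumes val_zero [simp]: "u \<zero> = \<infinity>"
    and val_one [simp]: "u \<one> = 0"
    and val_mult: "\<lbrakk>x \<in> carrier R; y \<in> carrier R\<rbrakk> \<Longrightarrow> u (x \<otimes> y) = u x + u y"
    and val_add: "\<lbrakk>x \<in> carrier R; y \<in> carrier R\<rbrakk> \<Longrightarrow> min (u x) (u y) \<le> u (x \<oplus> y)"
begin

lemma val_uminus_ge:
  assumes "x \<in> carrier R" shows "u x \<le> u (\<ominus> x)"
proof -
  have "u (\<ominus> x) = u (\<ominus> \<one> \<otimes> x)"
    using assms by (simp add: l_minus)
  also have "\<dots> = u (\<ominus> \<one>) + u x"
    using assms by (simp add: val_mult)
  finally show ?thesis by simp
qed

lemma val_uminus [simp]: "x \<in> carrier R \<Longrightarrow> u (\<ominus> x) = u x"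
  using val_uminus_ge[of x] val_uminus_ge[of "\<ominus> x"] by simp

lemma val_pow: "x \<in> carrier R \<Longrightarrow> u (x [^] (n::nat)) = of_nat n * u x"
  by (induction n) (simp_all add: val_mult algebra_simps)

lemma val_finsum_ge:
  assumes "finite F" "f \<in> F \<rightarrow> carrier R" "\<And>k. k \<in> F \<Longrightarrow> e \<le> u (f k)"
  shows "e \<le> u (finsum R f F)"
  using assms
proof (induction F rule: finite_induct)
  case (insert x F)
  then have "min (u (f x)) (u (finsum R f F)) \<le> u (finsum R f (insert x F))"
    by (simp add: finsum_insert val_add)
  moreover have "e \<le> min (u (f x)) (u (finsum R f F))"
    using insert by simp
  ultimately show ?case by order
qed simp

lemma ideal_val_ge: "ideal {x \<in> carrier R. e \<le> u x} R"
proof (rule idealI)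
  show "subgroup {x \<in> carrier R. e \<le> u x} (add_monoid R)"
  proof (rule subgroup.intro)
    fix x y assume "x \<in> {x \<in> carrier R. e \<le> u x}" "y \<in> {x \<in> carrier R. e \<le> u x}"
    then show "x \<otimes>\<^bsub>add_monoid R\<^esub> y \<in> {x \<in> carrier R. e \<le> u x}"
      using val_add[of x y] by (auto intro: order_trans[OF min.boundedI])
  next
    fix x assume "x \<in> {x \<in> carrier R. e \<le> u x}"
    then show "inv\<^bsub>add_monoid R\<^esub> x \<in> {x \<in> carrier R. e \<le> u x}"
      by (simp flip: a_inv_def)
  qed auto
qed (auto simp: ring_axioms val_mult intro: add_increasing add_increasing2)

lemma ideal_prod_val_ge:
  assumes "J \<subseteq> {x \<in> carrier R. e \<le> u x}" "K \<subseteq> {x \<in> carrier R. f \<le> u x}"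
  shows "ideal_prod R J K \<subseteq> {x \<in> carrier R. e + f \<le> u x}"
proof
  fix z assume "z \<in> ideal_prod R J K"
  then show "z \<in> {x \<in> carrier R. e + f \<le> u x}"
  proof (induction z rule: ideal_prod.induct)
    case (prod x y)
    then have "x \<in> carrier R" "e \<le> u x" "y \<in> carrier R" "f \<le> u y"
      using assms by auto
    then show ?case by (simp add: val_mult add_mono)
  next
    case (sum s1 s2)
    then show ?case using val_add[of s1 s2] by (auto intro: order_trans[OF min.boundedI])
  qed
qed

lemma ideal_pow_val_ge:
  assumes "J \<subseteq> {x \<in> carrier R. e \<le> u x}"
  shows "ideal_pow R J k \<subseteq> {x \<in> carrier R. of_nat k * e \<le> u x}"
proof (induction k)
  case 0
  then show ?case by (auto simp: ideal_pow_def)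
next
  case (Suc k)
  have "ideal_pow R J (Suc k) = ideal_prod R J (ideal_pow R J k)"
    by (simp add: ideal_pow_def)
  also have "\<dots> \<subseteq> {x \<in> carrier R. e + of_nat k * e \<le> u x}"
    by (rule ideal_prod_val_ge[OF assms Suc])
  finally show ?case by (simp add: algebra_simps)
qed

lemma val_ge_if_integral_over_ideal:
  assumes "integral_over_ideal R J a" and J: "J \<subseteq> {x \<in> carrier R. enat m \<le> u x}"
  shows "enat m \<le> u a"
proof (rule ccontr)
  assume "\<not> enat m \<le> u a"
  then obtain p where p: "u a = enat p" "p < m"
    by (cases "u a") auto
  obtain n c where a: "a \<in> carrier R" and c: "\<And>i. i \<in> {1..n} \<Longrightarrow> c i \<in> ideal_pow R J i"
    and eq: "a [^] n \<oplus> (\<Oplus>i\<in>{1..n}. c i \<otimes> a [^] (n - i)) = \<zero>"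
    using assms(1) unfolding integral_over_ideal_def by blast
  have c_val: "c i \<in> carrier R \<and> enat (i * m) \<le> u (c i)" if "i \<in> {1..n}" for i
    using ideal_pow_val_ge[OF J, of i] c[OF that] by (auto simp: of_nat_eq_enat)
  have summand_val: "enat (n * p + 1) \<le> u (c i \<otimes> a [^] (n - i))" if i: "i \<in> {1..n}" for i
  proof -
    have "n * p = i * p + (n - i) * p"
      using i by (simp flip: add_mult_distrib)
    moreover have "i * Suc p \<le> i * m"
      using p(2) by (intro mult_le_mono2) simp
    ultimately have "n * p + 1 \<le> i * m + (n - i) * p"
      using i by simp
    also have "enat (i * m + (n - i) * p) \<le> u (c i) + u (a [^] (n - i))"
      using add_right_mono[OF conjunct2[OF c_val[OF i]], of "enat ((n - i) * p)"]
      by (simp add: val_pow a p(1) of_nat_eq_enat)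
    also have "\<dots> = u (c i \<otimes> a [^] (n - i))"
      using c_val[OF i] a by (simp add: val_mult)
    finally show ?thesis by simp
  qed
  have sum_closed: "(\<Oplus>i\<in>{1..n}. c i \<otimes> a [^] (n - i)) \<in> carrier R"
    using c_val a by (intro finsum_closed) auto
  have "\<ominus> (\<Oplus>i\<in>{1..n}. c i \<otimes> a [^] (n - i)) = a [^] n"
    using eq sum_closed a by (intro minus_equality) auto
  then have "u (a [^] n) = u (\<Oplus>i\<in>{1..n}. c i \<otimes> a [^] (n - i))"
    using val_uminus[OF sum_closed] by simp
  also have "enat (n * p + 1) \<le> \<dots>"
    using c_val a summand_val by (intro val_finsum_ge) auto
  finally show False
    using a p(1) by (simp add: val_pow of_nat_eq_enat)
qed

end

lemma valuation_comp_ring_hom: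
  assumes "valuation S u" "ring R" "h \<in> ring_hom R S"
  shows "valuation R (\<lambda>x. u (h x))"
proof -
  interpret S: valuation S u by fact
  interpret ring R by fact
  show ?thesis
    using assms(3) by unfold_locales
      (simp_all add: ring_hom_zero[OF assms(3) ring_axioms S.ring_axioms] ring_hom_one
        ring_hom_mult ring_hom_add ring_hom_closed S.val_mult S.val_add)
qed

lemma integral_over_ideal_self:
  assumes "ring R" "ideal J R" "a \<in> J"
  shows "integral_over_ideal R J a"
proof -
  interpret ring R by fact
  have a: "a \<in> carrier R"
    by (rule ideal.Icarr[OF assms(2,3)])
  have "\<ominus>\<^bsub>R\<^esub> a \<in> J"
    using additive_subgroup.a_inv_closed[OF ideal.axioms(1)[OF assms(2)] assms(3)] by simp
  then have "\<ominus>\<^bsub>R\<^esub> a \<otimes>\<^bsub>R\<^esub> \<one>\<^bsub>R\<^esub> \<in> ideal_prod R J (carrier R)"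
    by (rule ideal_prod.prod) simp
  then have neg_a: "\<ominus>\<^bsub>R\<^esub> a \<in> ideal_pow R J 1"
    using a by (simp add: ideal_pow_def)
  have "a [^]\<^bsub>R\<^esub> (1::nat) \<oplus>\<^bsub>R\<^esub>
      (\<Oplus>\<^bsub>R\<^esub>i\<in>{1..1::nat}. \<ominus>\<^bsub>R\<^esub> a \<otimes>\<^bsub>R\<^esub> a [^]\<^bsub>R\<^esub> (1 - i)) = \<zero>\<^bsub>R\<^esub>"
    using a by (simp add: finsum_insert r_neg)
  then show ?thesis
    unfolding integral_over_ideal_def using a neg_a by fastforce
qed

lemma integrally_closed_valuation_Inter:
  assumes "ring R" "\<And>i. i \<in> S \<Longrightarrow> valuation R (u i)"
  shows "integrally_closed_ideal R {x \<in> carrier R. \<forall>i\<in>S. enat (m i) \<le> u i x}"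
    (is "integrally_closed_ideal R ?J")
proof -
  interpret ring R by fact
  have "ideal ?J R"
  proof (cases "S = {}")
    case False
    have "?J = carrier R \<inter> \<Inter> ((\<lambda>i. {x \<in> carrier R. enat (m i) \<le> u i x}) ` S)"
      by auto
    moreover have "ideal (\<Inter> ((\<lambda>i. {x \<in> carrier R. enat (m i) \<le> u i x}) ` S)) R"
      using False assms(2) valuation.ideal_val_ge by (intro i_Intersect) auto
    ultimately show ?thesis
      by (simp add: i_intersect oneideal)
  qed (simp add: oneideal)
  moreover have "a \<in> ?J" if a: "integral_over_ideal R ?J a" for a
  proof -
    have "enat (m i) \<le> u i a" if "i \<in> S" for i
      using a by (rule valuation.val_ge_if_integral_over_ideal[OF assms(2)[OF that]]) (use that in auto)
    then show ?thesis
      using a by (simp add: integral_over_ideal_def)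
  qed
  ultimately show ?thesis
    unfolding integrally_closed_ideal_def
    using integral_over_ideal_self[OF assms(1)] by blast
qed

locale discrete_valuation_ring = domain V + valuation V v for V (structure) and v +
  assumes divides_iff_val_le: "\<lbrakk>x \<in> carrier V; y \<in> carrier V\<rbrakk> \<Longrightarrow> x divides y \<longleftrightarrow> v x \<le> v y"

lemma discrete_valuation_ring_if_DVR_with_val:
  assumes DVR: "DVR_with_val V v"
  shows "discrete_valuation_ring V v"
proof -
  interpret domain V
    using DVR by (simp add: DVR_with_val_def)
  have "v \<one>\<^bsub>V\<^esub> = v \<one>\<^bsub>V\<^esub> + v \<one>\<^bsub>V\<^esub>"
    using DVR one_closed unfolding DVR_with_val_def by (metis l_one)
  moreover have "v \<one>\<^bsub>V\<^esub> \<noteq> \<infinity>"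
    using DVR by (simp add: DVR_with_val_def)
  ultimately have "v \<one>\<^bsub>V\<^esub> = 0"
    by (cases "v \<one>\<^bsub>V\<^esub>") (simp_all add: zero_enat_def)
  with DVR show ?thesis
    by unfold_locales (simp_all add: DVR_with_val_def)
qed

context discrete_valuation_ring
begin

lemma max_ideal_eq: "max_ideal V = {y \<in> carrier V. 1 \<le> v y}"
proof -
  define M where "M = {y \<in> carrier V. 1 \<le> v y}"
  have one_notin: "\<one> \<notin> M"
    by (simp add: M_def)
  have one_mem: "\<one> \<in> J" if "ideal J V" "y \<in> J" "y \<notin> M" for J y
  proof -
    have y: "y \<in> carrier V"
      by (rule ideal.Icarr[OF that(1,2)])
    with that(3) have "v y \<le> v \<one>"
      by (cases "v y") (auto simp: M_def one_enat_def zero_enat_def)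
    then obtain c where "c \<in> carrier V" "\<one> = y \<otimes> c"
      using divides_iff_val_le[OF y one_closed] by (auto elim: dividesE)
    then show ?thesis
      using ideal.I_r_closed[OF that(1,2)] by simp
  qed
  have "maximalideal M V"
  proof (rule maximalidealI)
    show "ideal M V"
      unfolding M_def by (rule ideal_val_ge)
    show "carrier V \<noteq> M"
      using one_notin by blast
    fix J assume J: "ideal J V" "M \<subseteq> J" "J \<subseteq> carrier V"
    show "J = M \<or> J = carrier V"
    proof (cases "J = M")
      case False
      with J one_mem have "\<one> \<in> J" by blast
      then show ?thesis
        using ideal.one_imp_carrier[OF J(1)] by blast
    qed simp
  qed
  moreover have "Q = M" if "maximalideal Q V" for Q
  proof -
    interpret Q: maximalideal Q V by fact
    have "Q \<subseteq> M"
    proof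
      fix y assume "y \<in> Q"
      show "y \<in> M"
      proof (rule ccontr)
        assume "y \<notin> M"
        then show False
          using one_mem[OF Q.is_ideal \<open>y \<in> Q\<close>] Q.one_imp_carrier Q.I_notcarr by simp
      qed
    qed
    then show ?thesis
      using Q.I_maximal[OF \<open>maximalideal M V\<close>[THEN maximalideal.axioms(1)]] one_notin
      unfolding M_def by blast
  qed
  ultimately show ?thesis
    unfolding max_ideal_def M_def[symmetric] by (rule the_equality)
qed

lemma genideal_eq_val_ge:
  assumes "S \<subseteq> carrier V" "s \<in> S" "\<And>t. t \<in> S \<Longrightarrow> v s \<le> v t"
  shows "Idl S = {y \<in> carrier V. v s \<le> v y}"
proof
  show "Idl S \<subseteq> {y \<in> carrier V. v s \<le> v y}"
    using assms by (intro genideal_minimal ideal_val_ge) auto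
next
  show "{y \<in> carrier V. v s \<le> v y} \<subseteq> Idl S"
  proof
    fix y assume y: "y \<in> {y \<in> carrier V. v s \<le> v y}"
    then obtain c where "c \<in> carrier V" "y = s \<otimes> c"
      using assms divides_iff_val_le[of s y] by (auto elim: dividesE)
    moreover have "s \<in> Idl S"
      using genideal_self[OF assms(1)] assms(2) by (rule subsetD)
    ultimately show "y \<in> Idl S"
      using ideal.I_r_closed[OF genideal_ideal[OF assms(1)]] by simp
  qed
qed

lemma max_ideal_genideal_prod_eq:
  assumes "S \<subseteq> carrier V" "s \<in> S" "\<And>t. t \<in> S \<Longrightarrow> v s \<le> v t" "v s = enat k"
  shows "ideal_prod V (max_ideal V) (Idl S) = {y \<in> carrier V. enat (Suc k) \<le> v y}"
proof
  show "ideal_prod V (max_ideal V) (Idl S) \<subseteq> {y \<in> carrier V. enat (Suc k) \<le> v y}"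
    using ideal_prod_val_ge[of "max_ideal V" 1 "Idl S" "enat k"]
    by (simp add: max_ideal_eq genideal_eq_val_ge[OF assms(1-3)] assms(4) one_enat_def)
next
  show "{y \<in> carrier V. enat (Suc k) \<le> v y} \<subseteq> ideal_prod V (max_ideal V) (Idl S)"
  proof
    fix y assume y: "y \<in> {y \<in> carrier V. enat (Suc k) \<le> v y}"
    have s: "s \<in> carrier V"
      using assms(1,2) by blast
    have "enat k \<le> v y"
      using y by (simp add: Suc_ile_eq less_imp_le)
    then obtain c where c: "c \<in> carrier V" "y = s \<otimes> c"
      using divides_iff_val_le[OF s] y assms(4) by (auto elim: dividesE)
    with y s assms(4) have "1 \<le> v c"
      by (cases "v c") (auto simp: val_mult one_enat_def)
    then have "c \<otimes> s \<in> ideal_prod V (max_ideal V) (Idl S)"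
      using c(1) s by (intro ideal_prod.prod) (simp_all add: max_ideal_eq genideal_eq_val_ge[OF assms(1-3)])
    then show "y \<in> ideal_prod V (max_ideal V) (Idl S)"
      using c s by (simp add: m_comm)
  qed
qed

end

lemma val_of_ideal_attained:
  assumes "I \<noteq> {}"
  shows "\<exists>b\<in>I. w (\<phi> b) = val_of_ideal w \<phi> I"
proof -
  have "Inf ((\<lambda>b. w (\<phi> b)) ` I) \<in> (\<lambda>b. w (\<phi> b)) ` I"
    using assms unfolding Inf_enat_def by (auto intro: LeastI)
  then show ?thesis
    unfolding val_of_ideal_def by auto
qed

lemma (in discrete_valuation_ring) ring_hom_mem_max_ideal_genideal_iff:
  assumes "ring A" "\<phi> \<in> ring_hom A V" "I \<subseteq> carrier A" "I \<noteq> {}"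
    and "val_of_ideal v \<phi> I = enat k" "a \<in> carrier A"
  shows "\<phi> a \<in> ideal_prod V (max_ideal V) (Idl (\<phi> ` I)) \<longleftrightarrow> enat (Suc k) \<le> v (\<phi> a)"
proof -
  obtain b where b: "b \<in> I" "v (\<phi> b) = enat k"
    using val_of_ideal_attained[OF assms(4), of v \<phi>] assms(5) by auto
  have "ideal_prod V (max_ideal V) (Idl (\<phi> ` I)) = {y \<in> carrier V. enat (Suc k) \<le> v y}"
  proof (rule max_ideal_genideal_prod_eq)
    show "\<phi> ` I \<subseteq> carrier V"
      using assms(3) ring_hom_closed[OF assms(2)] by auto
    show "\<And>t. t \<in> \<phi> ` I \<Longrightarrow> v (\<phi> b) \<le> v t"
      using assms(5) b(2) unfolding val_of_ideal_def by (metis INF_lower imageE)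
  qed (use b in auto)
  then show ?thesis
    using ring_hom_closed[OF assms(2,6)] by simp
qed

lemma ideal_ideal_pow:
  assumes "ring R" "ideal I R"
  shows "ideal (ideal_pow R I n) R"
proof (induction n)
  case 0
  then show ?case by (simp add: ideal_pow_def ring.oneideal[OF assms(1)])
next
  case (Suc n)
  then show ?case
    using ring.ideal_prod_is_ideal[OF assms] by (simp add: ideal_pow_def)
qed

lemma asymp_samuel_zero:
  assumes "ring R" "ideal I R"
  shows "asymp_samuel R I \<zero>\<^bsub>R\<^esub> = \<infinity>"
proof -
  interpret ring R by fact
  have "ord_ideal R I \<zero>\<^bsub>R\<^esub> = \<infinity>"
    using additive_subgroup.zero_closed[OF ideal.axioms(1)[OF ideal_ideal_pow[OF assms]]]
    by (simp add: ord_ideal_def)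
  then have "\<forall>\<^sub>F n in sequentially.
      ereal_of_enat (ord_ideal R I (\<zero>\<^bsub>R\<^esub> [^]\<^bsub>R\<^esub> n)) / ereal (real n) = \<infinity>"
    by (intro eventually_sequentiallyI[of 1]) (simp add: nat_pow_zero divide_ereal_def)
  then show ?thesis
    unfolding asymp_samuel_def by (intro limI tendsto_eventually)
qed

text \<open>An index with \<open>v\<^sub>i(I) = \<infinity>\<close> would contribute \<open>v\<^sub>i(0) / \<infinity> = 0\<close> to the Rees formula at
  \<open>a = 0\<close>, against \<open>v\<^sub>I(0) = \<infinity>\<close>.\<close>

lemma rees_formula_val_of_ideal_finite:
  assumes "ring A" "ideal I A" "rees_formula A I S \<phi> v" "i \<in> S"
  shows "val_of_ideal (v i) (\<phi> i) I \<noteq> \<infinity>"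
proof
  assume infinite: "val_of_ideal (v i) (\<phi> i) I = \<infinity>"
  have "asymp_samuel A I \<zero>\<^bsub>A\<^esub>
      \<le> ereal_of_enat (v i (\<phi> i \<zero>\<^bsub>A\<^esub>)) / ereal_of_enat (val_of_ideal (v i) (\<phi> i) I)"
    using assms(3,4) ring.ring_simprules(2)[OF assms(1)] unfolding rees_formula_def
    by (auto intro: INF_lower)
  also have "\<dots> = 0"
    by (simp add: infinite divide_ereal_def)
  finally show False
    using asymp_samuel_zero[OF assms(1,2)] by simp
qed

lemma one_less_divide_enat_iff:
  "1 < ereal_of_enat x / ereal (real m) \<longleftrightarrow> enat m < x"
proof (cases x)
  case (enat p)
  then show ?thesis
    by (cases "m = 0") (auto simp: divide_ereal_def field_simps zero_enat_def)
next
  case infinity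
  then show ?thesis
    by (cases "m = 0") (auto simp: divide_ereal_def)
qed

lemma I_greater_eq_if_rees_formula:
  assumes "rees_formula A I S \<phi> v" "finite S"
    and "\<And>i. i \<in> S \<Longrightarrow> val_of_ideal (v i) (\<phi> i) I = enat (k i)"
  shows "I_greater A I = {a \<in> carrier A. \<forall>i\<in>S. enat (Suc (k i)) \<le> v i (\<phi> i a)}"
proof -
  have "1 < asymp_samuel A I a \<longleftrightarrow> (\<forall>i\<in>S. enat (k i) < v i (\<phi> i a))" if "a \<in> carrier A" for a
  proof -
    have samuel: "asymp_samuel A I a =
        (INF i\<in>S. ereal_of_enat (v i (\<phi> i a)) / ereal_of_enat (enat (k i)))"
      using assms(1,3) that unfolding rees_formula_def by (simp cong: INF_cong_simp)
    show ?thesis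
    proof (cases "S = {}")
      case False
      then show ?thesis
        unfolding samuel using assms(2) by (simp add: finite_less_Inf_iff one_less_divide_enat_iff)
    qed (simp add: samuel top_ereal_def)
  qed
  then show ?thesis
    unfolding I_greater_def by (auto simp: Suc_ile_eq)
qed

theorem lemma4p2:
  fixes A :: "('a, 'b) ring_scheme" and I :: "'a set" and r :: nat
    and V :: "nat \<Rightarrow> ('v, 'c) ring_scheme" and \<phi> :: "nat \<Rightarrow> 'a \<Rightarrow> 'v"
    and v :: "nat \<Rightarrow> 'v \<Rightarrow> enat"
  assumes "cring A" and "noetherian_ring A"
    and "regular_ideal A I"
    and "rees_valuation_rings A I r V \<phi> v"
  shows "I_greater A I =
           carrier A \<inter> (\<Inter>i\<in>{..<r}.
              {a \<in> carrier A. \<phi> i a \<in> ideal_prod (V i) (max_ideal (V i)) (Idl\<^bsub>V i\<^esub> (\<phi> i ` I))}) \<and>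
         integrally_closed_ideal A (I_greater A I)"
proof -
  interpret A: cring A by fact
  have I: "ideal I A"
    using assms(3) by (simp add: regular_ideal_def)
  have I_carrier: "I \<subseteq> carrier A" and I_nonempty: "I \<noteq> {}"
    using ideal.Icarr[OF I] additive_subgroup.zero_closed[OF ideal.axioms(1)[OF I]] by auto
  have DVR: "discrete_valuation_ring (V i) (v i)" and hom: "\<phi> i \<in> ring_hom A (V i)" if "i < r" for i
    using assms(4) that by (auto simp: rees_valuation_rings_def intro: discrete_valuation_ring_if_DVR_with_val)
  have rees: "rees_formula A I {..<r} \<phi> v"
    using assms(4) by (simp add: rees_valuation_rings_def)
  define k where "k i = the_enat (val_of_ideal (v i) (\<phi> i) I)" for i
  have k: "val_of_ideal (v i) (\<phi> i) I = enat (k i)" if "i < r" for i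
  proof -
    have "val_of_ideal (v i) (\<phi> i) I \<noteq> \<infinity>"
      using rees_formula_val_of_ideal_finite[OF A.ring_axioms I rees, of i] that by simp
    then show ?thesis
      by (cases "val_of_ideal (v i) (\<phi> i) I") (simp_all add: k_def)
  qed
  let ?J = "{a \<in> carrier A. \<forall>i\<in>{..<r}. enat (Suc (k i)) \<le> v i (\<phi> i a)}"
  have "I_greater A I = ?J"
    using rees k by (intro I_greater_eq_if_rees_formula) auto
  moreover have "\<phi> i a \<in> ideal_prod (V i) (max_ideal (V i)) (Idl\<^bsub>V i\<^esub> (\<phi> i ` I))
      \<longleftrightarrow> enat (Suc (k i)) \<le> v i (\<phi> i a)" if "i < r" "a \<in> carrier A" for i a
    using discrete_valuation_ring.ring_hom_mem_max_ideal_genideal_iff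
        [OF DVR[OF that(1)] A.ring_axioms hom[OF that(1)] I_carrier I_nonempty k[OF that(1)] that(2)] .
  moreover have "integrally_closed_ideal A ?J"
    using integrally_closed_valuation_Inter[OF A.ring_axioms, of "{..<r}" "\<lambda>i a. v i (\<phi> i a)"]
      valuation_comp_ring_hom[OF discrete_valuation_ring.axioms(2)[OF DVR] A.ring_axioms hom]
    by simp
  ultimately show ?thesis
    by auto
qed

end
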